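(* Let $(\mathcal S,\gamma)$ be a normalized IFS arc in $\mathbb{R}^n$. Suppose there is a constant $C\ge1$ such that for all case-2-triples $(x,z,y)$, $$\max\{|x-z|,|z-y|\}\le C|x-y|.\qquad( * )$$ Then $\gamma$ has bounded turning with constant $\frac{2C\operatorname{diam}(\gamma)}{D_{\mathcal S}}$. Conversely, if $\gamma$ has bounded turning with constant $C\ge1$, then $( * )$ holds for all points $x\le z\le y$ of $\gamma$.
   Context: $\mathcal S=\{S_1,\dots,S_N\}$, $N\ge2$, are contracting similarities of $\mathbb{R}^n$ with invariant set $\gamma$ (unique nonempty compact set with $\gamma=\bigcup_iS_i(\gamma)$); normalized IFS path: $S_1(0)=0$, $S_N(\mathbf e_1)=\mathbf e_1$, $S_i(\mathbf e_1)=S_{i+1}(0)$ for $i=1,\dots,N-1$; IFS arc: moreover $S_i(\gamma)\cap S_{i+1}(\gamma)=\{S_{i+1}(0)\}$ and $S_i(\gamma)\cap S_j(\gamma)=\emptyset$ for $|i-j|>1$, $i,j\in\{1,\dots,N\}$. Then $\gamma$ is homeomorphic to $[0,1]$, and $\le$ denotes the induced total order on $\gamma$ with $0<\mathbf e_1$; $\gamma_{x,y}=\{p: x\le p\le y\}$ for $x\le y$, and $x\le A$ means $x\le p$ for all $p\in A$. For $\sigma\in\{1,\dots,N\}^m$ write $S_\sigma=S_{\sigma_1}\circ\cdots\circ S_{\sigma_m}$ (identity for the empty word); a vertex of generation $m\ge1$ is a point $S_\sigma(0)$ or $S_\sigma(\mathbf e_1)$ with $\sigma\in\{1,\dots,N\}^m$.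 $D_{\mathcal S}=\min_{z,\tilde z}\min\{|x-y|: x,y\in\gamma,\ x\le\gamma_{z,\tilde z}\le y\}$, the first minimum over pairs $z<\tilde z$ of distinct generation-1 vertices. For $x<y$ in $\gamma$, let $m\ge1$ be the smallest integer such that some generation-$m$ vertex $z$ satisfies $x\le z\le y$; if $z$ is the only generation-$m$ vertex with $x\le z\le y$, the triple $(x,z,y)$ is called a case-2-triple. $\gamma$ has bounded turning with constant $C$ if any distinct $a,b\in\gamma$ lie in a continuum $E\subseteq\gamma$ with $\operatorname{diam}E\le C|a-b|$. *)

theory Defs
  imports "HOL-Analysis.Analysis"
begin

definition contracting_similarity :: "('a::metric_space \<Rightarrow> 'a) \<Rightarrow> bool" where
  "contracting_similarity f \<longleftrightarrow>
     (\<exists>r. 0 < r \<and> r < 1 \<and> (\<forall>x y. dist (f x) (f y) = r * dist x y))"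

text \<open>Normalized IFS arc: maps S 1, ..., S N, invariant set \<gamma>, e plays the role of e_1.\<close>
definition normalized_IFS_arc ::
  "nat \<Rightarrow> (nat \<Rightarrow> 'a::euclidean_space \<Rightarrow> 'a) \<Rightarrow> 'a set \<Rightarrow> 'a \<Rightarrow> bool" where
  "normalized_IFS_arc N S \<gamma> e \<longleftrightarrow>
     2 \<le> N \<and>
     (\<forall>i\<in>{1..N}. contracting_similarity (S i)) \<and>
     compact \<gamma> \<and> \<gamma> \<noteq> {} \<and> \<gamma> = (\<Union>i\<in>{1..N}. S i ` \<gamma>) \<and>
     S 1 0 = 0 \<and> S N e = e \<and>
     (\<forall>i\<in>{1..<N}. S i e = S (Suc i) 0) \<and>
     (\<forall>i\<in>{1..<N}. S i ` \<gamma> \<inter> S (Suc i) ` \<gamma> = {S (Suc i) 0}) \<and>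
     (\<forall>i\<in>{1..N}. \<forall>j\<in>{1..N}. (i + 1 < j \<or> j + 1 < i) \<longrightarrow> S i ` \<gamma> \<inter> S j ` \<gamma> = {})"

definition arc_le :: "'a::euclidean_space set \<Rightarrow> 'a \<Rightarrow> 'a \<Rightarrow> 'a \<Rightarrow> bool" where
  "arc_le \<gamma> e x y \<longleftrightarrow> x \<in> \<gamma> \<and> y \<in> \<gamma> \<and>
     (\<exists>(h::real \<Rightarrow> 'a) g. homeomorphism {0..1} \<gamma> h g \<and> g 0 < g e \<and> g x \<le> g y)"

definition arc_less :: "'a::euclidean_space set \<Rightarrow> 'a \<Rightarrow> 'a \<Rightarrow> 'a \<Rightarrow> bool" where
  "arc_less \<gamma> e x y \<longleftrightarrow> arc_le \<gamma> e x y \<and> x \<noteq> y"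

definition arc_seg :: "'a::euclidean_space set \<Rightarrow> 'a \<Rightarrow> 'a \<Rightarrow> 'a \<Rightarrow> 'a set" where
  "arc_seg \<gamma> e x y = {p. arc_le \<gamma> e x p \<and> arc_le \<gamma> e p y}"

definition word_map :: "(nat \<Rightarrow> 'a \<Rightarrow> 'a) \<Rightarrow> nat list \<Rightarrow> 'a \<Rightarrow> 'a" where
  "word_map S \<sigma> = foldr (\<lambda>i f. S i \<circ> f) \<sigma> id"

definition words :: "nat \<Rightarrow> nat \<Rightarrow> nat list set" where
  "words N m = {\<sigma>. length \<sigma> = m \<and> set \<sigma> \<subseteq> {1..N}}"

definition vertices :: "nat \<Rightarrow> (nat \<Rightarrow> 'a::euclidean_space \<Rightarrow> 'a) \<Rightarrow> 'a \<Rightarrow> nat \<Rightarrow> 'a set" where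
  "vertices N S e m = (\<lambda>\<sigma>. word_map S \<sigma> 0) ` words N m \<union> (\<lambda>\<sigma>. word_map S \<sigma> e) ` words N m"

definition D_S :: "nat \<Rightarrow> (nat \<Rightarrow> 'a::euclidean_space \<Rightarrow> 'a) \<Rightarrow> 'a set \<Rightarrow> 'a \<Rightarrow> real" where
  "D_S N S \<gamma> e = Inf {dist x y | x y z z'.
       z \<in> vertices N S e 1 \<and> z' \<in> vertices N S e 1 \<and> arc_less \<gamma> e z z' \<and>
       x \<in> \<gamma> \<and> y \<in> \<gamma> \<and>
       (\<forall>p\<in>arc_seg \<gamma> e z z'. arc_le \<gamma> e x p) \<and>
       (\<forall>p\<in>arc_seg \<gamma> e z z'. arc_le \<gamma> e p y)}"

definition case2_triple ::
  "nat \<Rightarrow> (nat \<Rightarrow> 'a::euclidean_space \<Rightarrow> 'a) \<Rightarrow> 'a set \<Rightarrow> 'a \<Rightarrow> 'a \<Rightarrow> 'a \<Rightarrow> 'a \<Rightarrow> bool" where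
  "case2_triple N S \<gamma> e x z y \<longleftrightarrow> arc_less \<gamma> e x y \<and>
     (\<exists>m\<ge>1. (\<forall>k. 1 \<le> k \<and> k < m \<longrightarrow>
                 \<not> (\<exists>v\<in>vertices N S e k. arc_le \<gamma> e x v \<and> arc_le \<gamma> e v y)) \<and>
            z \<in> vertices N S e m \<and> arc_le \<gamma> e x z \<and> arc_le \<gamma> e z y \<and>
            (\<forall>v\<in>vertices N S e m. arc_le \<gamma> e x v \<and> arc_le \<gamma> e v y \<longrightarrow> v = z))"

definition bounded_turning :: "'a::metric_space set \<Rightarrow> real \<Rightarrow> bool" where
  "bounded_turning \<gamma> C \<longleftrightarrow>
     (\<forall>a\<in>\<gamma>. \<forall>b\<in>\<gamma>. a \<noteq> b \<longrightarrow>
        (\<exists>E. E \<subseteq> \<gamma> \<and> compact E \<and> connected E \<and> a \<in> E \<and> b \<in> E \<and>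
             diameter E \<le> C * dist a b))"

end

theory Submission
  imports Defs
begin

text \<open>The arc \<open>\<gamma>\<close> has the self-similar parametrization \<open>h : [0,1] \<rightarrow> \<gamma>\<close> with
  \<open>h ((i - 1 + u) / N) = S\<^sub>i (h u)\<close>: it is the uniform limit of the iterates of this gluing
  operator, it is injective because consecutive pieces meet only at their junction, and its image is
  \<open>\<gamma>\<close> because compact invariant sets of contractions coincide. So the order of \<open>\<gamma>\<close> is the order
  of parameters and the vertices of generation \<open>m\<close> are the points \<open>h (j / N^m)\<close>.

  Conversely, a continuum in \<open>\<gamma>\<close> through \<open>x\<close> and \<open>y\<close> contains the subarc between them.
  For bounded turning, let \<open>s < t\<close> and let \<open>m\<close> be the least level with a grid point
  \<open>j / N^m\<close> in \<open>[s,t]\<close>. If there are two, \<open>[s,t]\<close> lies in one level-\<open>(m-1)\<close> cell and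
  straddles two of its subcells; mapping the cell onto \<open>\<gamma>\<close> by the composite similarity of ratio
  \<open>\<rho>\<close>, the endpoints are at distance at least \<open>\<rho> D\<^sub>S\<close> while the subarc has diameter at
  most \<open>\<rho> diam \<gamma>\<close>. If there is exactly one, \<open>c\<close>, then \<open>(h s, h c, h t)\<close> is a case-2-triple
  and \<open>[s,c]\<close>, \<open>[c,t]\<close> are shorter than \<open>N^-m\<close>, so the first case applies to each at a finer
  level; adding the two bounds and using \<open>(*)\<close> gives the constant \<open>2 C diam \<gamma> / D\<^sub>S\<close>.\<close>

definition similarity_ratio :: "('a::metric_space \<Rightarrow> 'a) \<Rightarrow> real" where
  "similarity_ratio f = (SOME r. 0 < r \<and> r < 1 \<and> (\<forall>x y. dist (f x) (f y) = r * dist x y))"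

lemma
  assumes "contracting_similarity f"
  shows similarity_ratio_pos: "0 < similarity_ratio f"
    and similarity_ratio_less_1: "similarity_ratio f < 1"
    and dist_similarity: "dist (f x) (f y) = similarity_ratio f * dist x y"
proof -
  have "\<exists>r. 0 < r \<and> r < 1 \<and> (\<forall>x y. dist (f x) (f y) = r * dist x y)"
    using assms by (simp add: contracting_similarity_def)
  then have "0 < similarity_ratio f \<and> similarity_ratio f < 1 \<and>
      (\<forall>x y. dist (f x) (f y) = similarity_ratio f * dist x y)"
    unfolding similarity_ratio_def by (rule someI_ex)
  then show "0 < similarity_ratio f" "similarity_ratio f < 1"
    "dist (f x) (f y) = similarity_ratio f * dist x y" by auto
qed

lemma contracting_similarity_inj: "contracting_similarity f \<Longrightarrow> f x = f y \<longleftrightarrow> x = y"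
  by (metis dist_similarity similarity_ratio_pos dist_eq_0_iff mult_eq_0_iff less_irrefl)

lemma contracting_similarity_lipschitz:
  "contracting_similarity f \<Longrightarrow> lipschitz_on (similarity_ratio f) A f"
  by (intro lipschitz_onI) (auto simp: dist_similarity similarity_ratio_pos less_imp_le)

lemma word_map_Nil [simp]: "word_map S [] = id"
  by (simp add: word_map_def)

lemma word_map_Cons [simp]: "word_map S (i # \<sigma>) = S i \<circ> word_map S \<sigma>"
  by (simp add: word_map_def)

lemma word_map_similarity:
  assumes "\<And>i. i \<in> set \<sigma> \<Longrightarrow> contracting_similarity (S i)"
  shows "\<exists>\<rho>>0. \<forall>x y. dist (word_map S \<sigma> x) (word_map S \<sigma> y) = \<rho> * dist x y"
  using assms
proof (induction \<sigma>)
  case (Cons i \<sigma>)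
  then obtain \<rho> where "0 < \<rho>" "\<forall>x y. dist (word_map S \<sigma> x) (word_map S \<sigma> y) = \<rho> * dist x y"
    by auto
  with Cons.prems show ?case
    by (intro exI[of _ "similarity_ratio (S i) * \<rho>"])
      (simp add: dist_similarity similarity_ratio_pos)
qed (auto intro: exI[of _ 1])

text \<open>Comparison of invariant sets: the point of \<open>A\<close> farthest from \<open>B\<close> is the image of a point
  of \<open>A\<close> at most as far from \<open>B\<close>, so a strict contraction forces that distance to vanish.\<close>
lemma contraction_invariant_subset:
  fixes f :: "'i \<Rightarrow> 'a::heine_borel \<Rightarrow> 'a"
  assumes contr: "\<And>i. i \<in> I \<Longrightarrow> \<exists>r<1. r-lipschitz_on UNIV (f i)"
    and A: "compact A" "A \<subseteq> (\<Union>i\<in>I. f i ` A)"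
    and B: "compact B" "B \<noteq> {}" "(\<Union>i\<in>I. f i ` B) \<subseteq> B"
  shows "A \<subseteq> B"
proof (cases "A = {}")
  case False
  have clB: "closed B" using B(1) by (rule compact_imp_closed)
  have "continuous_on A (\<lambda>x. infdist x B)" by (intro continuous_intros)
  then obtain a0 where a0: "a0 \<in> A" "\<And>y. y \<in> A \<Longrightarrow> infdist y B \<le> infdist a0 B"
    using continuous_attains_sup[OF A(1) False] by blast
  from a0(1) A(2) obtain i a where i: "i \<in> I" "a \<in> A" "a0 = f i a" by blast
  obtain r where r: "r < 1" "r-lipschitz_on UNIV (f i)" using contr[OF i(1)] by blast
  obtain b where b: "b \<in> B" "infdist a B = dist a b"
    using infdist_attains_inf[OF clB B(2)] by blast
  have "f i b \<in> B" using b(1) i(1) B(3) by blast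
  then have "infdist a0 B \<le> dist (f i a) (f i b)" unfolding i(3) by (rule infdist_le)
  also have "\<dots> \<le> r * infdist a B" using lipschitz_onD[OF r(2)] b(2) by simp
  also have "\<dots> \<le> r * infdist a0 B" by (rule mult_left_mono[OF a0(2)[OF i(2)] lipschitz_on_nonneg[OF r(2)]])
  finally have "(1 - r) * infdist a0 B \<le> 0" by (simp add: algebra_simps)
  then have "infdist a0 B = 0" using r(1) infdist_nonneg[of a0 B] by (simp add: mult_le_0_iff)
  then have "\<forall>x\<in>A. infdist x B = 0" using a0(2) infdist_nonneg by (metis order_antisym)
  then show ?thesis using in_closed_iff_infdist_zero[OF clB B(2)] by blast
qed simp

lemma continuous_inj_on_strict_mono_on:
  fixes f :: "real \<Rightarrow> real"
  assumes cont: "continuous_on {a..b} f" and inj: "inj_on f {a..b}" and ab: "f a < f b"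
  shows "strict_mono_on {a..b} f"
proof (rule strict_mono_onI)
  have left: "f a < f y" if "a < y" "y \<le> b" for y
    using continuous_inj_imp_mono[OF _ _ cont inj, of y] that ab by (cases "y = b") auto
  fix x y assume xy: "x \<in> {a..b}" "y \<in> {a..b}" "x < y"
  show "f x < f y"
  proof (cases "x = a")
    case False
    have "continuous_on {a..y} f" "inj_on f {a..y}"
      using xy by (auto intro: continuous_on_subset[OF cont] inj_on_subset[OF inj])
    with continuous_inj_imp_mono[of a x y f] left[of y] xy False show ?thesis by auto
  qed (use left xy in auto)
qed

lemma diameter_Un_le:
  fixes A B :: "'a::real_normed_vector set"
  assumes A: "bounded A" and B: "bounded B" and x: "x \<in> A" "x \<in> B"
  shows "diameter (A \<union> B) \<le> diameter A + diameter B"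
proof (rule diameter_le)
  have dA: "dist u v \<le> diameter A" if "u \<in> A" "v \<in> A" for u v
    using diameter_bounded_bound[OF A that] .
  have dB: "dist u v \<le> diameter B" if "u \<in> B" "v \<in> B" for u v
    using diameter_bounded_bound[OF B that] .
  have pos: "0 \<le> diameter A" "0 \<le> diameter B" using A B by (auto intro: diameter_ge_0)
  then show "A \<union> B \<noteq> {} \<or> 0 \<le> diameter A + diameter B" by simp
  fix a b assume "a \<in> A \<union> B" "b \<in> A \<union> B"
  then consider "a \<in> A" "b \<in> A" | "a \<in> B" "b \<in> B" | "a \<in> A" "b \<in> B" | "a \<in> B" "b \<in> A"
    by blast
  then have "dist a b \<le> diameter A + diameter B"
  proof cases
    case 3
    then show ?thesis using dist_triangle[of a b x] dA[of a x] dB[of x b] x by simp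
  next
    case 4
    then show ?thesis using dist_triangle[of a b x] dB[of a x] dA[of x b] x by simp
  qed (use dA dB pos in \<open>fastforce+\<close>)
  then show "norm (a - b) \<le> diameter A + diameter B" by (simp add: dist_norm)
qed

lemma exists_power_bracket:
  fixes b d :: real
  assumes b: "1 < b" and d: "0 < d" "d < 1 / b ^ m"
  shows "\<exists>p\<ge>m. 1 / b ^ Suc p \<le> d \<and> d < 1 / b ^ p"
proof -
  have "1 / b < 1" using b by simp
  then obtain n where "(1 / b) ^ n < d" using real_arch_pow_inv d(1) by blast
  moreover have "1 / b ^ Suc n \<le> 1 / b ^ n" using b by (intro divide_left_mono power_increasing) auto
  ultimately have ex: "1 / b ^ Suc n \<le> d" by (simp add: power_one_over)
  define p where "p = (LEAST p. 1 / b ^ Suc p \<le> d)"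
  have p: "1 / b ^ Suc p \<le> d" unfolding p_def by (rule LeastI[where P = "\<lambda>p. 1 / b ^ Suc p \<le> d", OF ex])
  have "d < 1 / b ^ p"
  proof (cases p)
    case (Suc p')
    then show ?thesis using not_less_Least[of p' "\<lambda>p. 1 / b ^ Suc p \<le> d"] by (simp add: p_def)
  next
    case 0
    have "1 / b ^ m \<le> 1" using b by simp
    then show ?thesis using 0 d by simp
  qed
  moreover have "m \<le> p"
  proof (rule ccontr)
    assume "\<not> m \<le> p"
    then have "1 / b ^ m \<le> 1 / b ^ Suc p" using b by (intro divide_left_mono power_increasing) auto
    then show False using p d by simp
  qed
  ultimately show ?thesis using p by blast
qed

locale IFS_arc =
  fixes N :: nat and S :: "nat \<Rightarrow> 'a::euclidean_space \<Rightarrow> 'a" and \<gamma> :: "'a set" and e :: 'a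
  assumes e_nonzero: "e \<noteq> 0" and arc: "normalized_IFS_arc N S \<gamma> e"
begin

lemma N_ge_2: "2 \<le> N"
  and compact_\<gamma>: "compact \<gamma>"
  and \<gamma>_nonempty: "\<gamma> \<noteq> {}"
  and \<gamma>_invariant: "\<gamma> = (\<Union>i\<in>{1..N}. S i ` \<gamma>)"
  and S_1_0: "S 1 0 = 0"
  and S_N_e: "S N e = e"
  and S_junction: "i \<in> {1..<N} \<Longrightarrow> S i e = S (Suc i) 0"
  and S_adjacent_Int: "i \<in> {1..<N} \<Longrightarrow> S i ` \<gamma> \<inter> S (Suc i) ` \<gamma> = {S (Suc i) 0}"
  and S_distant_Int: "i \<in> {1..N} \<Longrightarrow> j \<in> {1..N} \<Longrightarrow> i + 1 < j \<Longrightarrow> S i ` \<gamma> \<inter> S j ` \<gamma> = {}"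
  and S_similarity: "i \<in> {1..N} \<Longrightarrow> contracting_similarity (S i)"
  using arc unfolding normalized_IFS_arc_def by blast+

lemma N_pos: "0 < real N" and N_gt_1: "1 < real N"
  using N_ge_2 by auto

lemma N_power_pos: "0 < real N ^ m"
  using N_pos by simp

lemma S_inj: "i \<in> {1..N} \<Longrightarrow> S i x = S i y \<longleftrightarrow> x = y"
  by (rule contracting_similarity_inj[OF S_similarity])

lemma S_continuous_on: "i \<in> {1..N} \<Longrightarrow> continuous_on A (S i)"
  by (rule lipschitz_on_continuous_on[OF contracting_similarity_lipschitz[OF S_similarity]])

lemma norm_S_diff: "i \<in> {1..N} \<Longrightarrow> norm (S i x - S i y) = similarity_ratio (S i) * norm (x - y)"
  using dist_similarity[OF S_similarity] by (simp add: dist_norm)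

definition max_ratio :: real where
  "max_ratio = Max ((\<lambda>i. similarity_ratio (S i)) ` {1..N})"

lemma max_ratio_pos: "0 < max_ratio"
  and max_ratio_less_1: "max_ratio < 1"
  and similarity_ratio_le_max_ratio: "i \<in> {1..N} \<Longrightarrow> similarity_ratio (S i) \<le> max_ratio"
proof -
  have fin: "finite ((\<lambda>i. similarity_ratio (S i)) ` {1..N})" "(\<lambda>i. similarity_ratio (S i)) ` {1..N} \<noteq> {}"
    using N_ge_2 by auto
  obtain j where "j \<in> {1..N}" "max_ratio = similarity_ratio (S j)"
    using Max_in[OF fin] unfolding max_ratio_def by auto
  then show "0 < max_ratio" "max_ratio < 1"
    using similarity_ratio_pos similarity_ratio_less_1 S_similarity by auto
  show "i \<in> {1..N} \<Longrightarrow> similarity_ratio (S i) \<le> max_ratio" unfolding max_ratio_def using fin by auto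
qed

text \<open>The parameter interval is cut into \<open>N\<close> pieces \<open>[(i-1)/N, i/N]\<close>; \<open>piece t\<close> and \<open>coord t\<close> are
  the index of a piece containing \<open>t\<close> and the position of \<open>t\<close> in it, rescaled to \<open>[0,1]\<close>.\<close>
definition piece :: "real \<Rightarrow> nat" where
  "piece t = (if 1 \<le> t then N else nat \<lfloor>real N * t\<rfloor> + 1)"

definition coord :: "real \<Rightarrow> real" where
  "coord t = real N * t - (real (piece t) - 1)"

definition glue :: "(real \<Rightarrow> 'a) \<Rightarrow> real \<Rightarrow> 'a" where
  "glue f t = S (piece t) (f (coord t))"

lemma piece_range: assumes "t \<in> {0..1}" shows "piece t \<in> {1..N}"
proof (cases "1 \<le> t")
  case False
  then have "real N * t < real N" using N_pos assms by auto
  then have "\<lfloor>real N * t\<rfloor> < int N" by (simp add: floor_less_iff)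
  moreover have "0 \<le> \<lfloor>real N * t\<rfloor>" using assms by auto
  ultimately have "nat \<lfloor>real N * t\<rfloor> < N" by (simp add: nat_less_iff)
  then show ?thesis using False by (auto simp: piece_def)
qed (use N_ge_2 in \<open>auto simp: piece_def\<close>)

lemma coord_range: assumes "t \<in> {0..1}" shows "coord t \<in> {0..1}"
proof (cases "1 \<le> t")
  case True
  then have "t = 1" using assms by auto
  then show ?thesis using N_ge_2 by (auto simp: coord_def piece_def)
next
  case False
  have "0 \<le> real N * t" using assms by auto
  then show ?thesis using False unfolding coord_def piece_def by (auto simp: of_nat_nat) linarith+
qed

lemma coord_less_1: "t \<in> {0..1} \<Longrightarrow> t < 1 \<Longrightarrow> coord t < 1"
  unfolding coord_def piece_def by (auto simp: of_nat_nat) linarith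

lemma piece_bounds: "t \<in> {0..1} \<Longrightarrow> (real (piece t) - 1) / N \<le> t \<and> t \<le> real (piece t) / N"
  using coord_range[of t] N_pos by (auto simp: coord_def field_simps)

lemma piece_cases:
  assumes i: "i \<in> {1..N}" and t: "(real i - 1) / N \<le> t" "t \<le> real i / N"
  shows "piece t = i \<or> (i < N \<and> t = real i / N \<and> piece t = Suc i \<and> coord t = 0)"
proof -
  have a: "real i - 1 \<le> real N * t" "real N * t \<le> real i" using t N_pos by (auto simp: field_simps)
  show ?thesis
  proof (cases "1 \<le> t")
    case True
    then have "real N \<le> real i" using a N_pos by (smt (verit) mult_le_cancel_left1)
    then show ?thesis using i True by (auto simp: piece_def)
  next
    case lt1: False
    show ?thesis
    proof (cases "real N * t = real i")
      case True
      then have "i < N" using lt1 N_pos by (smt (verit) mult_less_cancel_left2 of_nat_less_iff)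
      then show ?thesis using lt1 True N_pos by (auto simp: piece_def coord_def field_simps)
    next
      case False
      then have "\<lfloor>real N * t\<rfloor> = int i - 1" using a by (intro floor_unique) auto
      then show ?thesis using lt1 i by (auto simp: piece_def)
    qed
  qed
qed

lemma glue_on_piece:
  assumes f: "f 0 = 0" "f 1 = e" and i: "i \<in> {1..N}"
    and t: "(real i - 1) / N \<le> t" "t \<le> real i / N"
  shows "glue f t = S i (f (real N * t - (real i - 1)))"
  using piece_cases[OF i t]
proof
  assume h: "i < N \<and> t = real i / N \<and> piece t = Suc i \<and> coord t = 0"
  then have "real N * t - (real i - 1) = 1" using N_pos by auto
  moreover have "piece t = Suc i" "coord t = 0" using h by auto
  then have "glue f t = S (Suc i) 0" using f by (simp add: glue_def)
  ultimately show ?thesis using f S_junction[of i] h i by simp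
qed (simp add: glue_def coord_def)

lemma glue_0: "f 0 = 0 \<Longrightarrow> glue f 0 = 0"
  using N_ge_2 S_1_0 by (simp add: glue_def piece_def coord_def)

lemma glue_1: "f 1 = e \<Longrightarrow> glue f 1 = e"
  using N_ge_2 S_N_e by (simp add: glue_def piece_def coord_def of_nat_diff)

lemma piece_subset: "i \<in> {1..N} \<Longrightarrow> {(real i - 1) / N .. real i / N} \<subseteq> {0..1}"
  using N_pos by (auto simp: field_simps)

lemma interval_eq_Union_pieces: "{0..1} = (\<Union>i\<in>{1..N}. {(real i - 1) / N .. real i / N})"
proof
  show "{0..1} \<subseteq> (\<Union>i\<in>{1..N}. {(real i - 1) / N .. real i / N})"
    using piece_range piece_bounds by fastforce
  show "(\<Union>i\<in>{1..N}. {(real i - 1) / N .. real i / N}) \<subseteq> {0..1}"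
    using piece_subset by blast
qed

lemma continuous_on_glue:
  assumes c: "continuous_on {0..1} f" and f: "f 0 = 0" "f 1 = e"
  shows "continuous_on {0..1} (glue f)"
  unfolding interval_eq_Union_pieces
proof (rule continuous_on_closed_Union)
  fix i assume i: "i \<in> {1..N}"
  have "(\<lambda>t. real N * t - (real i - 1)) ` {(real i - 1) / N .. real i / N} \<subseteq> {0..1}"
    using N_pos by (auto simp: field_simps)
  then have "continuous_on {(real i - 1) / N .. real i / N} (\<lambda>t. S i (f (real N * t - (real i - 1))))"
    by (intro continuous_on_compose2[OF S_continuous_on[OF i]] continuous_on_compose2[OF c]
        continuous_intros) auto
  then show "continuous_on {(real i - 1) / N .. real i / N} (glue f)"
    by (rule continuous_on_eq) (use glue_on_piece[OF f i] in auto)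
qed auto

lemma glue_dist_le:
  assumes t: "t \<in> {0..1}" and b: "\<And>u. u \<in> {0..1} \<Longrightarrow> norm (f u - f' u) \<le> c"
  shows "norm (glue f t - glue f' t) \<le> max_ratio * c"
proof -
  have i: "piece t \<in> {1..N}" by (rule piece_range[OF t])
  have "norm (glue f t - glue f' t) = similarity_ratio (S (piece t)) * norm (f (coord t) - f' (coord t))"
    unfolding glue_def by (rule norm_S_diff[OF i])
  also have "\<dots> \<le> max_ratio * c"
    by (intro mult_mono similarity_ratio_le_max_ratio[OF i] b coord_range[OF t])
      (use similarity_ratio_pos[OF S_similarity[OF i]] max_ratio_pos in auto)
  finally show ?thesis .
qed

text \<open>The parametrization \<open>h\<close> of \<open>\<gamma>\<close> is the limit of the iterates of \<open>glue\<close> starting from the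
  segment \<open>[0, e]\<close>; since \<open>glue\<close> contracts uniform distances by \<open>max_ratio\<close>, the iterates converge
  geometrically.\<close>
definition approx :: "nat \<Rightarrow> real \<Rightarrow> 'a" where
  "approx k = (glue ^^ k) (\<lambda>t. t *\<^sub>R e)"

definition h :: "real \<Rightarrow> 'a" where
  "h t = t *\<^sub>R e + (\<Sum>k. approx (Suc k) t - approx k t)"

lemma approx_0: "approx 0 t = t *\<^sub>R e"
  and approx_Suc: "approx (Suc k) = glue (approx k)"
  by (simp_all add: approx_def)

lemma approx_endpoints: "approx k 0 = 0 \<and> approx k 1 = e"
  by (induction k) (auto simp: approx_Suc approx_0 glue_0 glue_1)

lemma continuous_on_approx: "continuous_on {0..1} (approx k)"
  by (induction k) (auto simp: approx_0 approx_Suc approx_endpoints intro!: continuous_on_glue continuous_intros)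

lemma approx_step_bound:
  "t \<in> {0..1} \<Longrightarrow> norm (approx (Suc k) t - approx k t) \<le> max_ratio ^ k * (Max ((\<lambda>i. norm (S i 0)) ` {1..N}) + 2 * norm e)"
proof (induction k arbitrary: t)
  case 0
  define i where "i = piece t"
  have i: "i \<in> {1..N}" using piece_range[OF 0] by (simp add: i_def)
  have u: "coord t \<in> {0..1}" by (rule coord_range[OF 0])
  have "norm (S i (coord t *\<^sub>R e) - S i 0) = similarity_ratio (S i) * (\<bar>coord t\<bar> * norm e)"
    using norm_S_diff[OF i] by simp
  also have "\<dots> \<le> 1 * (1 * norm e)"
    using similarity_ratio_pos[OF S_similarity[OF i]] similarity_ratio_less_1[OF S_similarity[OF i]] u
    by (intro mult_mono) auto
  finally have a: "norm (S i (coord t *\<^sub>R e) - S i 0) \<le> norm e" by simp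
  have b: "norm (S i 0) \<le> Max ((\<lambda>i. norm (S i 0)) ` {1..N})" using i by (intro Max_ge) auto
  have c: "norm (t *\<^sub>R e) \<le> norm e" using 0 by (auto intro: mult_left_le_one_le)
  have "approx 1 t - approx 0 t = (S i (coord t *\<^sub>R e) - S i 0) + (S i 0 - t *\<^sub>R e)"
    by (simp add: approx_Suc approx_0 glue_def i_def)
  then have "norm (approx 1 t - approx 0 t) \<le> norm (S i (coord t *\<^sub>R e) - S i 0) + norm (S i 0 - t *\<^sub>R e)"
    by (simp only: norm_triangle_ineq)
  then show ?case using a b c norm_triangle_ineq4[of "S i 0" "t *\<^sub>R e"] by simp
next
  case (Suc k)
  have "norm (glue (approx (Suc k)) t - glue (approx k) t) \<le> max_ratio * (max_ratio ^ k *
      (Max ((\<lambda>i. norm (S i 0)) ` {1..N}) + 2 * norm e))"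
    by (rule glue_dist_le[OF Suc.prems Suc.IH])
  then show ?case by (simp add: approx_Suc[of "Suc k"] approx_Suc[of k])
qed

lemma uniform_limit_approx: "uniform_limit {0..1} approx h sequentially"
proof -
  have "uniform_limit {0..1} (\<lambda>n t. \<Sum>k<n. approx (Suc k) t - approx k t)
      (\<lambda>t. \<Sum>k. approx (Suc k) t - approx k t) sequentially"
    by (rule Weierstrass_m_test[OF approx_step_bound])
      (use max_ratio_pos max_ratio_less_1 in \<open>auto intro!: summable_mult2 summable_geometric\<close>)
  then have "uniform_limit {0..1} (\<lambda>n t. t *\<^sub>R e + (\<Sum>k<n. approx (Suc k) t - approx k t)) h sequentially"
    unfolding h_def by (rule uniform_limit_add[OF uniform_limit_const])
  moreover have "t *\<^sub>R e + (\<Sum>k<n. approx (Suc k) t - approx k t) = approx n t" for n t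
    using sum_lessThan_telescope[of "\<lambda>k. approx k t" n] by (simp add: approx_0)
  ultimately show ?thesis by simp
qed

lemma continuous_on_h: "continuous_on {0..1} h"
  by (rule uniform_limit_theorem[OF always_eventually[OF allI[OF continuous_on_approx]]
        uniform_limit_approx]) simp

lemma approx_tendsto: "t \<in> {0..1} \<Longrightarrow> (\<lambda>k. approx k t) \<longlonglongrightarrow> h t"
  by (rule tendsto_uniform_limitI[OF uniform_limit_approx])

lemma h_0: "h 0 = 0" and h_1: "h 1 = e"
proof -
  have "(\<lambda>k. approx k 0) \<longlonglongrightarrow> h 0" "(\<lambda>k. approx k 1) \<longlonglongrightarrow> h 1"
    by (simp_all add: approx_tendsto)
  then show "h 0 = 0" "h 1 = e" by (simp_all add: approx_endpoints LIMSEQ_const_iff)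
qed

lemma h_glue: assumes t: "t \<in> {0..1}" shows "h t = glue h t"
proof -
  have i: "piece t \<in> {1..N}" by (rule piece_range[OF t])
  have "isCont (S (piece t)) (h (coord t))"
    using S_continuous_on[OF i, of UNIV] by (simp add: continuous_on_eq_continuous_at)
  then have "(\<lambda>k. approx (Suc k) t) \<longlonglongrightarrow> glue h t"
    unfolding approx_Suc glue_def by (rule isCont_tendsto_compose[OF _ approx_tendsto[OF coord_range[OF t]]])
  with LIMSEQ_Suc[OF approx_tendsto[OF t]] show ?thesis by (rule LIMSEQ_unique)
qed

lemma h_on_piece:
  assumes i: "i \<in> {1..N}" and t: "(real i - 1) / N \<le> t" "t \<le> real i / N"
  shows "h t = S i (h (real N * t - (real i - 1)))"
proof -
  have "t \<in> {0..1}" using piece_subset[OF i] t by auto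
  then show ?thesis using h_glue glue_on_piece[OF h_0 h_1 i t] by simp
qed

lemma h_image: "h ` {0..1} = \<gamma>"
proof -
  let ?K = "h ` {0..1}"
  have K: "compact ?K" by (rule compact_continuous_image[OF continuous_on_h]) simp
  have "h t \<in> (\<Union>i\<in>{1..N}. S i ` ?K)" if "t \<in> {0..1}" for t
    using h_glue[OF that] piece_range[OF that] coord_range[OF that]
    by (auto simp: glue_def intro!: bexI[of _ "piece t"])
  then have sub: "?K \<subseteq> (\<Union>i\<in>{1..N}. S i ` ?K)" by blast
  have sup: "S i (h u) \<in> ?K" if "i \<in> {1..N}" "u \<in> {0..1}" for i u
  proof -
    define t where "t = (u + real i - 1) / N"
    have "(real i - 1) / N \<le> t" "t \<le> real i / N" "real N * t - (real i - 1) = u"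
      using that N_pos by (auto simp: t_def divide_right_mono)
    moreover have "t \<in> {0..1}" using piece_subset[OF that(1)] calculation(1,2) by auto
    ultimately show ?thesis using h_on_piece[OF that(1)] by (metis image_eqI)
  qed
  have contr: "\<exists>r<1. r-lipschitz_on UNIV (S i)" if "i \<in> {1..N}" for i
    using contracting_similarity_lipschitz similarity_ratio_less_1 S_similarity[OF that] by blast
  have "?K \<subseteq> \<gamma>"
    by (rule contraction_invariant_subset[OF contr K sub compact_\<gamma> \<gamma>_nonempty]) (use \<gamma>_invariant in auto)
  moreover have "\<gamma> \<subseteq> ?K"
    by (rule contraction_invariant_subset[OF contr compact_\<gamma> _ K])
      (use \<gamma>_invariant sup in \<open>auto simp del: atLeastAtMost_iff\<close>)
  ultimately show ?thesis by blast
qed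

lemma h_in_\<gamma>: "t \<in> {0..1} \<Longrightarrow> h t \<in> \<gamma>"
  using h_image by blast

lemma e_in_\<gamma>: "e \<in> \<gamma>"
  using h_in_\<gamma>[of 1] h_1 by auto

lemma e_in_image_S_imp: assumes i: "i \<in> {1..N}" and ei: "e \<in> S i ` \<gamma>" shows "i = N"
proof (rule ccontr)
  assume "i \<noteq> N"
  have eN: "e \<in> S N ` \<gamma>" using S_N_e e_in_\<gamma> by (metis image_eqI)
  have NN: "N \<in> {1..N}" using N_ge_2 by auto
  show False
  proof (cases "i + 1 = N")
    case True
    then have "e = S N 0" using S_adjacent_Int[of i] i ei eN by auto
    then show False using S_inj[OF NN] S_N_e e_nonzero by metis
  next
    case False
    then show False using S_distant_Int[OF i NN] \<open>i \<noteq> N\<close> i ei eN by auto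
  qed
qed

lemma h_eq_e_imp_ge: "t \<in> {0..1} \<Longrightarrow> h t = e \<Longrightarrow> 1 - (1 / real N) ^ m \<le> t"
proof (induction m arbitrary: t)
  case (Suc m)
  have i: "piece t \<in> {1..N}" by (rule piece_range[OF Suc.prems(1)])
  have u: "coord t \<in> {0..1}" by (rule coord_range[OF Suc.prems(1)])
  have eq: "S (piece t) (h (coord t)) = e" using h_glue[OF Suc.prems(1)] Suc.prems(2) by (simp add: glue_def)
  then have "e \<in> S (piece t) ` \<gamma>" using h_in_\<gamma>[OF u] by (metis image_eqI)
  then have N: "piece t = N" by (rule e_in_image_S_imp[OF i])
  then have "h (coord t) = e" using eq S_N_e S_inj i by metis
  then have "1 - (1 / real N) ^ m \<le> real N * t - (real N - 1)" using Suc.IH u N by (simp add: coord_def)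
  then show ?case using N_pos by (simp add: field_simps)
qed simp

lemma h_eq_e: assumes "t \<in> {0..1}" "h t = e" shows "t = 1"
proof (rule ccontr)
  assume "t \<noteq> 1"
  then have "0 < 1 - t" using assms by auto
  moreover have "1 / real N < 1" using N_gt_1 by simp
  ultimately obtain m where "(1 / real N) ^ m < 1 - t" using real_arch_pow_inv by blast
  then show False using h_eq_e_imp_ge[OF assms, of m] by simp
qed

text \<open>Points of \<open>\<gamma>\<close> coming from different pieces can only coincide at a junction point, which
  would force \<open>h (coord s) = e\<close> with \<open>coord s < 1\<close>.\<close>
lemma h_eq_imp_same_piece:
  assumes st: "s \<in> {0..1}" "t \<in> {0..1}" "h s = h t" and le: "piece s \<le> piece t"
  shows "piece s = piece t \<and> h (coord s) = h (coord t)"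
proof -
  have i: "piece s \<in> {1..N}" and j: "piece t \<in> {1..N}" using piece_range st by auto
  have us: "coord s \<in> {0..1}" and ut: "coord t \<in> {0..1}" using coord_range st by auto
  have hs: "h s \<in> S (piece s) ` \<gamma>" using h_glue[OF st(1)] h_in_\<gamma>[OF us] by (auto simp: glue_def)
  have ht: "h t \<in> S (piece t) ` \<gamma>" using h_glue[OF st(2)] h_in_\<gamma>[OF ut] by (auto simp: glue_def)
  have "piece s = piece t"
  proof (rule ccontr)
    assume "piece s \<noteq> piece t"
    then consider "piece s + 1 < piece t" | "piece t = Suc (piece s)" using le by linarith
    then show False
    proof cases
      case 1
      then show False using S_distant_Int[OF i j] hs ht st(3) by auto
    next
      case 2
      then have i': "piece s \<in> {1..<N}" using i j by auto
      then have "S (piece s) (h (coord s)) = S (piece s) e"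
        using S_adjacent_Int[OF i'] S_junction[OF i'] hs ht st(3) 2 h_glue[OF st(1)] by (auto simp: glue_def)
      then have "coord s = 1" using S_inj[OF i] h_eq_e[OF us] by blast
      moreover have "s < 1" using i' by (cases "1 \<le> s") (auto simp: piece_def)
      ultimately show False using coord_less_1[OF st(1)] by simp
    qed
  qed
  then show ?thesis using h_glue st S_inj[OF i] by (auto simp: glue_def)
qed

lemma h_eq_imp_close: "s \<in> {0..1} \<Longrightarrow> t \<in> {0..1} \<Longrightarrow> h s = h t \<Longrightarrow> \<bar>s - t\<bar> \<le> (1 / real N) ^ m"
proof (induction m arbitrary: s t)
  case 0
  then have "0 \<le> s" "s \<le> 1" "0 \<le> t" "t \<le> 1" by auto
  then show ?case by (simp add: abs_le_iff)
next
  case (Suc m)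
  have step: "\<bar>s - t\<bar> \<le> (1 / real N) ^ Suc m"
    if st: "s \<in> {0..1}" "t \<in> {0..1}" "h s = h t" "piece s \<le> piece t" for s t
  proof -
    have same: "piece s = piece t" "h (coord s) = h (coord t)" using h_eq_imp_same_piece[OF st] by auto
    then have "\<bar>coord s - coord t\<bar> \<le> (1 / real N) ^ m" using Suc.IH coord_range st by blast
    moreover have "coord s - coord t = real N * (s - t)" using same by (simp add: coord_def algebra_simps)
    ultimately have "real N * \<bar>s - t\<bar> \<le> (1 / real N) ^ m" using N_pos by (simp add: abs_mult)
    then show ?thesis using N_pos by (simp add: field_simps)
  qed
  show ?case using step[of s t] step[of t s] Suc.prems by (cases "piece s \<le> piece t") (auto simp: abs_minus_commute)
qed

lemma inj_on_h: "inj_on h {0..1}"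
proof (rule inj_onI, rule ccontr)
  fix s t assume st: "s \<in> {0..1}" "t \<in> {0..1}" "h s = h t" "s \<noteq> t"
  then obtain m where "(1 / real N) ^ m < \<bar>s - t\<bar>" using real_arch_pow_inv N_gt_1 by fastforce
  then show False using h_eq_imp_close[OF st(1-3)] by (meson not_le)
qed

definition g :: "'a \<Rightarrow> real" where
  "g = (SOME g. homeomorphism {0..1} \<gamma> h g)"

lemma homeomorphism_h_g: "homeomorphism {0..1} \<gamma> h g"
proof -
  have "\<exists>g. homeomorphism {0..1} \<gamma> h g"
    by (rule homeomorphism_compact[OF _ continuous_on_h h_image inj_on_h]) simp
  then show ?thesis unfolding g_def by (rule someI_ex)
qed

lemma g_h: "t \<in> {0..1} \<Longrightarrow> g (h t) = t"
  and h_g: "x \<in> \<gamma> \<Longrightarrow> h (g x) = x"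
  and g_in_interval: "x \<in> \<gamma> \<Longrightarrow> g x \<in> {0..1}"
  and continuous_on_g: "continuous_on \<gamma> g"
  using homeomorphism_h_g by (auto simp: homeomorphism_def)

lemma g_0: "g 0 = 0" and g_e: "g e = 1"
  using g_h[of 0] g_h[of 1] h_0 h_1 by auto

text \<open>Any other parametrization \<open>h'\<close> with inverse \<open>g'\<close> differs from \<open>h\<close> by the continuous
  injection \<open>g' \<circ> h\<close> of \<open>[0,1]\<close>, which is increasing once \<open>g' 0 < g' e\<close>.\<close>
lemma arc_le_iff: "arc_le \<gamma> e x y \<longleftrightarrow> x \<in> \<gamma> \<and> y \<in> \<gamma> \<and> g x \<le> g y"
proof
  assume "x \<in> \<gamma> \<and> y \<in> \<gamma> \<and> g x \<le> g y"
  then show "arc_le \<gamma> e x y" unfolding arc_le_def using homeomorphism_h_g g_0 g_e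
    by (intro conjI exI[of _ h] exI[of _ g]) auto
next
  assume "arc_le \<gamma> e x y"
  then obtain h' :: "real \<Rightarrow> 'a" and g' where xy: "x \<in> \<gamma>" "y \<in> \<gamma>"
    and H: "homeomorphism {0..1} \<gamma> h' g'" and ord: "g' 0 < g' e" "g' x \<le> g' y"
    unfolding arc_le_def by blast
  have cont: "continuous_on {0..1} (g' \<circ> h)"
    using H h_image by (intro continuous_on_compose continuous_on_h) (auto simp: homeomorphism_def)
  have "inj_on g' \<gamma>" by (rule inj_on_inverseI[of _ h']) (use H in \<open>simp add: homeomorphism_def\<close>)
  then have inj: "inj_on (g' \<circ> h) {0..1}" using h_image by (intro comp_inj_on[OF inj_on_h]) simp
  have mono: "strict_mono_on {0..1} (g' \<circ> h)"
    by (rule continuous_inj_on_strict_mono_on[OF cont inj]) (use ord(1) h_0 h_1 in simp)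
  have "(g' \<circ> h) (g x) \<le> (g' \<circ> h) (g y)" using ord(2) h_g xy by simp
  moreover have "(g' \<circ> h) (g y) < (g' \<circ> h) (g x) \<longleftrightarrow> g y < g x"
    by (rule strict_mono_on_less[OF mono]) (use g_in_interval xy in auto)
  ultimately have "g x \<le> g y" by (meson not_le)
  then show "x \<in> \<gamma> \<and> y \<in> \<gamma> \<and> g x \<le> g y" using xy by simp
qed

lemma arc_le_h_iff: "s \<in> {0..1} \<Longrightarrow> t \<in> {0..1} \<Longrightarrow> arc_le \<gamma> e (h s) (h t) \<longleftrightarrow> s \<le> t"
  by (simp add: arc_le_iff h_in_\<gamma> g_h)

lemma arc_seg_h: "s \<in> {0..1} \<Longrightarrow> t \<in> {0..1} \<Longrightarrow> arc_seg \<gamma> e (h s) (h t) = h ` {s..t}"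
  unfolding arc_seg_def arc_le_iff using h_g g_h g_in_interval h_in_\<gamma>
  by (auto simp: image_iff) (metis atLeastAtMost_iff)+

lemma bounded_turning_imp_dist_le:
  assumes bt: "bounded_turning \<gamma> C" and xz: "arc_le \<gamma> e x z" and zy: "arc_le \<gamma> e z y"
  shows "max (dist x z) (dist z y) \<le> C * dist x y"
proof -
  have m: "x \<in> \<gamma>" "y \<in> \<gamma>" "z \<in> \<gamma>" "g x \<le> g z" "g z \<le> g y" using xz zy arc_le_iff by auto
  show ?thesis
  proof (cases "x = y")
    case True
    then have "g z = g x" using m by simp
    then have "z = x" using m h_g by metis
    then show ?thesis using True by simp
  next
    case False
    then obtain E where E: "E \<subseteq> \<gamma>" "compact E" "connected E" "x \<in> E" "y \<in> E"
      "diameter E \<le> C * dist x y" using bt m unfolding bounded_turning_def by blast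
    have "connected (g ` E)" by (rule connected_continuous_image[OF continuous_on_subset[OF continuous_on_g E(1)] E(3)])
    then have "{g x..g y} \<subseteq> g ` E" using connected_contains_Icc E(4,5) by blast
    then have "g z \<in> g ` E" using m by auto
    then obtain w where "w \<in> E" "g z = g w" by auto
    then have "z \<in> E" using h_g m E(1) by (metis subsetD)
    then have "dist x z \<le> diameter E" "dist z y \<le> diameter E"
      using diameter_bounded_bound[OF compact_imp_bounded[OF E(2)]] E by auto
    then show ?thesis using E(6) by simp
  qed
qed

text \<open>\<open>word_code \<sigma>\<close> is the number whose base-\<open>N\<close> digits are the letters of \<open>\<sigma>\<close> minus one, so that
  \<open>S\<^sub>\<sigma>(\<gamma>)\<close> is the image under \<open>h\<close> of \<open>[word_code \<sigma> / N^|\<sigma>|, (word_code \<sigma> + 1) / N^|\<sigma>|]\<close>.\<close>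
fun word_code :: "nat list \<Rightarrow> nat" where
  "word_code [] = 0"
| "word_code (i # \<sigma>) = (i - 1) * N ^ length \<sigma> + word_code \<sigma>"

lemma word_code_less: "set \<sigma> \<subseteq> {1..N} \<Longrightarrow> word_code \<sigma> < N ^ length \<sigma>"
proof (induction \<sigma>)
  case (Cons i \<sigma>)
  then have i: "1 \<le> i" "i \<le> N" and c: "word_code \<sigma> < N ^ length \<sigma>" by auto
  have "(i - 1) * N ^ length \<sigma> + word_code \<sigma> < (i - 1) * N ^ length \<sigma> + N ^ length \<sigma>" using c by simp
  also have "\<dots> = i * N ^ length \<sigma>" using i by (cases i) auto
  also have "\<dots> \<le> N * N ^ length \<sigma>" using i by simp
  finally show ?case by simp
qed simp

lemma word_code_surj: "j < N ^ m \<Longrightarrow> \<exists>\<sigma>\<in>words N m. word_code \<sigma> = j"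
proof (induction m arbitrary: j)
  case (Suc m)
  have pos: "0 < N ^ m" using N_ge_2 by simp
  define i where "i = j div N ^ m + 1"
  have "j div N ^ m < N" using Suc.prems pos by (simp add: div_less_iff_less_mult mult.commute)
  then have i: "i \<in> {1..N}" by (auto simp: i_def)
  obtain \<sigma> where \<sigma>: "\<sigma> \<in> words N m" "word_code \<sigma> = j mod N ^ m" using Suc.IH[of "j mod N ^ m"] pos by auto
  have "word_code (i # \<sigma>) = j" using \<sigma> by (simp add: i_def words_def div_mult_mod_eq)
  moreover have "i # \<sigma> \<in> words N (Suc m)" using \<sigma> i by (auto simp: words_def)
  ultimately show ?case by blast
qed (auto simp: words_def)

lemma h_word:
  assumes "set \<sigma> \<subseteq> {1..N}" "u \<in> {0..1}"
  shows "h ((real (word_code \<sigma>) + u) / real N ^ length \<sigma>) = word_map S \<sigma> (h u)"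
  using assms
proof (induction \<sigma>)
  case (Cons i \<sigma>)
  let ?m = "length \<sigma>"
  have i: "i \<in> {1..N}" using Cons.prems by auto
  define v where "v = (real (word_code \<sigma>) + u) / real N ^ ?m"
  have "real (word_code \<sigma>) + 1 \<le> real N ^ ?m"
    using word_code_less Cons.prems by (metis Suc_leI insert_subset list.simps(15) of_nat_Suc
        of_nat_le_iff of_nat_power add.commute)
  then have v: "v \<in> {0..1}" using Cons.prems N_power_pos[of ?m] by (auto simp: v_def field_simps)
  have "real (word_code (i # \<sigma>)) = (real i - 1) * real N ^ ?m + real (word_code \<sigma>)"
    using i by (simp add: of_nat_diff)
  then have t: "(real (word_code (i # \<sigma>)) + u) / real N ^ length (i # \<sigma>) = (real i - 1 + v) / N"
    unfolding v_def using N_power_pos[of ?m] N_pos by (simp add: field_simps)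
  have "(real i - 1) / N \<le> (real i - 1 + v) / N" "(real i - 1 + v) / N \<le> real i / N"
    using v N_pos by (auto simp: divide_right_mono)
  then have "h ((real i - 1 + v) / N) = S i (h v)" using h_on_piece[OF i] N_pos by simp
  also have "h v = word_map S \<sigma> (h u)" unfolding v_def using Cons by auto
  finally show ?case using t by simp
qed simp

definition grid :: "nat \<Rightarrow> real set" where
  "grid m = {real j / real N ^ m | j. j \<le> N ^ m}"

lemma grid_memI: "j \<le> N ^ m \<Longrightarrow> real j / real N ^ m \<in> grid m"
  unfolding grid_def by blast

lemma grid_subset_interval: "c \<in> grid m \<Longrightarrow> c \<in> {0..1}"
  using N_power_pos[of m] by (auto simp: grid_def divide_le_eq_1 simp flip: of_nat_power)

lemma grid_1_gap: "c \<in> grid 1 \<Longrightarrow> c' \<in> grid 1 \<Longrightarrow> c < c' \<Longrightarrow> c + 1 / N \<le> c'"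
  using N_pos by (auto simp: grid_def add_divide_distrib[symmetric] divide_right_mono divide_less_cancel)

lemma grid_mono: assumes "m \<le> p" "c \<in> grid m" shows "c \<in> grid p"
proof -
  obtain j where j: "j \<le> N ^ m" "c = real j / real N ^ m" using assms(2) by (auto simp: grid_def)
  have pow: "N ^ p = N ^ m * N ^ (p - m)" using assms(1) by (simp flip: power_add)
  then have "j * N ^ (p - m) \<le> N ^ p" using j(1) by simp
  then have "real (j * N ^ (p - m)) / real N ^ p \<in> grid p" by (rule grid_memI)
  moreover have "c = real (j * N ^ (p - m)) / real N ^ p"
    using j(2) N_pos by (simp add: pow flip: of_nat_power)
  ultimately show ?thesis by (simp only:)
qed

lemma grid_less_1_obtain:
  assumes "c \<in> grid p" "c < 1"
  obtains k where "k < N ^ p" "c = real k / real N ^ p"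
proof -
  obtain j where j: "j \<le> N ^ p" "c = real j / real N ^ p" using assms(1) by (auto simp: grid_def)
  have "j \<noteq> N ^ p" using j assms(2) N_power_pos[of p] by auto
  with j show ?thesis by (intro that[of j]) auto
qed

lemma grid_add_step: "c \<in> grid p \<Longrightarrow> c < 1 \<Longrightarrow> c + 1 / real N ^ p \<in> grid p"
  by (erule grid_less_1_obtain, assumption)
    (use grid_memI[of "Suc _" p] in \<open>auto simp: add_divide_distrib Suc_le_eq add.commute\<close>)

lemma grid_diff_step:
  assumes "c \<in> grid p" "0 < c"
  shows "c - 1 / real N ^ p \<in> grid p"
proof -
  obtain j where j: "j \<le> N ^ p" "c = real j / real N ^ p" using assms(1) by (auto simp: grid_def)
  then have "0 < j" using assms(2) by (cases j) auto
  then have "c - 1 / real N ^ p = real (j - 1) / real N ^ p" using j(2) by (simp add: of_nat_diff diff_divide_distrib)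
  then show ?thesis using j(1) grid_memI[of "j - 1" p] by simp
qed

lemma grid_meets_interval:
  assumes "0 \<le> s" "t \<le> 1" "1 / real N ^ m \<le> t - s"
  shows "\<exists>c\<in>grid m. s \<le> c \<and> c \<le> t"
proof -
  define j where "j = nat \<lceil>s * real N ^ m\<rceil>"
  have j: "s * real N ^ m \<le> real j" "real j < s * real N ^ m + 1"
    unfolding j_def using assms(1) N_power_pos[of m] by (simp_all add: of_nat_nat) linarith+
  have "s \<le> real j / real N ^ m" using j(1) N_power_pos[of m] by (simp add: pos_le_divide_eq)
  moreover have "real j / real N ^ m \<le> t"
    using j(2) assms(3) N_power_pos[of m] by (simp add: pos_divide_le_eq field_simps)
  moreover have "real j / real N ^ m \<le> 1" using calculation assms(2) by linarith
  then have "j \<le> N ^ m" using N_ge_2 by (simp add: divide_le_eq_1)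
  ultimately show ?thesis using grid_memI by blast
qed

lemma common_cell:
  assumes st: "0 \<le> s" "s \<le> t" "t \<le> 1" and none: "p = 0 \<or> (\<forall>c\<in>grid p. \<not> (s \<le> c \<and> c \<le> t))"
  obtains c0 where "c0 \<in> grid p" "c0 < 1" "c0 \<le> s" "t \<le> c0 + 1 / real N ^ p"
proof (cases "p = 0")
  case True
  then show ?thesis using that[of 0] st grid_memI[of 0 0] by simp
next
  case False
  then have none: "\<And>c. c \<in> grid p \<Longrightarrow> s \<le> c \<Longrightarrow> c \<le> t \<Longrightarrow> False" using none by blast
  have "1 \<in> grid p" using grid_memI[of "N ^ p" p] N_pos by simp
  then have s1: "s < 1" using none st by force
  define k where "k = nat \<lfloor>s * real N ^ p\<rfloor>"
  have k: "real k \<le> s * real N ^ p" "s * real N ^ p < real k + 1"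
    unfolding k_def using st N_power_pos[of p] by (simp_all add: of_nat_nat)
  have "s * real N ^ p < 1 * real N ^ p" by (rule mult_strict_right_mono) (use s1 N_power_pos in auto)
  then have "real k < real N ^ p" using k by linarith
  then have kp: "k < N ^ p" by (simp flip: of_nat_power)
  then have c0: "real k / real N ^ p \<in> grid p" by (simp add: grid_memI)
  have lt1: "real k / real N ^ p < 1" using kp N_power_pos[of p] by (simp flip: of_nat_power)
  have le: "real k / real N ^ p \<le> s" using k(1) N_power_pos[of p] by (simp add: pos_divide_le_eq)
  have "t \<le> real k / real N ^ p + 1 / real N ^ p"
  proof (rule ccontr)
    assume "\<not> ?thesis"
    moreover have "s \<le> real k / real N ^ p + 1 / real N ^ p"
      using k(2) N_pos by (simp add: field_simps)
    ultimately show False using none[OF grid_add_step[OF c0 lt1]] by linarith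
  qed
  then show ?thesis using that c0 lt1 le by blast
qed

lemma grid_zoom:
  assumes c0: "c0 \<in> grid p" and c: "c \<in> grid (Suc p)" and cell: "c0 \<le> c" "c \<le> c0 + 1 / real N ^ p"
  shows "real N ^ p * (c - c0) \<in> grid 1"
proof -
  obtain k where k: "c0 = real k / real N ^ p" using c0 by (auto simp: grid_def)
  obtain j where j: "c = real j / real N ^ Suc p" using c by (auto simp: grid_def)
  have "real (k * N) \<le> real j" "real j \<le> real ((k + 1) * N)"
    using cell N_pos N_power_pos[of p] by (auto simp: j k field_simps)
  then have kj: "k * N \<le> j" "j - k * N \<le> N" by (simp_all only: of_nat_le_iff) auto
  have "real N ^ p * (c - c0) = real (j - k * N) / real N"
    using kj(1) N_pos N_power_pos[of p] by (simp add: j k of_nat_diff field_simps)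
  then show ?thesis using grid_memI[of "j - k * N" 1] kj(2) by simp
qed

lemma vertices_eq_h_grid: "vertices N S e m = h ` grid m"
proof
  show "vertices N S e m \<subseteq> h ` grid m"
  proof
    fix v assume "v \<in> vertices N S e m"
    then obtain \<sigma> where \<sigma>: "\<sigma> \<in> words N m" "v = word_map S \<sigma> (h 0) \<or> v = word_map S \<sigma> (h 1)"
      unfolding vertices_def h_0 h_1 by auto
    have s: "set \<sigma> \<subseteq> {1..N}" "length \<sigma> = m" and less: "word_code \<sigma> < N ^ m"
      using \<sigma>(1) word_code_less by (auto simp: words_def)
    have "v = h ((real (word_code \<sigma>) + 0) / real N ^ m) \<or> v = h ((real (word_code \<sigma>) + 1) / real N ^ m)"
      using \<sigma>(2) h_word[OF s(1), of 0] h_word[OF s(1), of 1] s(2) by auto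
    moreover have "real (word_code \<sigma>) / real N ^ m \<in> grid m"
      "real (Suc (word_code \<sigma>)) / real N ^ m \<in> grid m"
      using less by (intro grid_memI; simp)+
    ultimately show "v \<in> h ` grid m" by (auto simp: add.commute)
  qed
  show "h ` grid m \<subseteq> vertices N S e m"
  proof
    fix v assume "v \<in> h ` grid m"
    then obtain j where j: "j \<le> N ^ m" "v = h (real j / real N ^ m)" unfolding grid_def by auto
    show "v \<in> vertices N S e m"
    proof (cases "j < N ^ m")
      case True
      obtain \<sigma> where \<sigma>: "\<sigma> \<in> words N m" "word_code \<sigma> = j" using word_code_surj[OF True] by auto
      then have "v = word_map S \<sigma> 0" using h_word[of \<sigma> 0] h_0 j by (simp add: words_def)
      then show ?thesis using \<sigma> unfolding vertices_def by auto
    next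
      case False
      have pos: "0 < N ^ m" using N_ge_2 by simp
      obtain \<sigma> where \<sigma>: "\<sigma> \<in> words N m" "word_code \<sigma> = N ^ m - 1"
        using word_code_surj[of "N ^ m - 1" m] pos by auto
      have "word_code \<sigma> + 1 = j" using \<sigma>(2) False j(1) pos by simp
      then have "real (word_code \<sigma>) + 1 = real j" by (metis of_nat_1 of_nat_add)
      then have "v = word_map S \<sigma> e" using h_word[of \<sigma> 1] h_1 j \<sigma>(1) by (simp add: words_def)
      then show ?thesis using \<sigma> unfolding vertices_def by auto
    qed
  qed
qed

abbreviation D :: real where
  "D \<equiv> D_S N S \<gamma> e"

definition gap_dists :: "real set" where
  "gap_dists = {dist x y | x y z z'. z \<in> vertices N S e 1 \<and> z' \<in> vertices N S e 1 \<and> arc_less \<gamma> e z z' \<and>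
       x \<in> \<gamma> \<and> y \<in> \<gamma> \<and> (\<forall>p\<in>arc_seg \<gamma> e z z'. arc_le \<gamma> e x p) \<and> (\<forall>p\<in>arc_seg \<gamma> e z z'. arc_le \<gamma> e p y)}"

lemma D_eq_Inf: "D = Inf gap_dists"
  by (simp add: D_S_def gap_dists_def)

lemma gap_dists_elem:
  assumes "d \<in> gap_dists"
  shows "\<exists>x y. d = dist x y \<and> x \<in> \<gamma> \<and> y \<in> \<gamma> \<and> g x + 1 / N \<le> g y"
proof -
  from assms obtain x y z z' where d: "d = dist x y" and xy: "x \<in> \<gamma>" "y \<in> \<gamma>"
    and z: "z \<in> vertices N S e 1" "z' \<in> vertices N S e 1" "arc_less \<gamma> e z z'"
    and below: "\<forall>p\<in>arc_seg \<gamma> e z z'. arc_le \<gamma> e x p" and above: "\<forall>p\<in>arc_seg \<gamma> e z z'. arc_le \<gamma> e p y"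
    unfolding gap_dists_def by blast
  obtain c c' where c: "c \<in> grid 1" "c' \<in> grid 1" "z = h c" "z' = h c'"
    using z(1,2) vertices_eq_h_grid by auto
  have c01: "c \<in> {0..1}" "c' \<in> {0..1}" using c grid_subset_interval by auto
  have "c \<le> c'" "c \<noteq> c'" using z(3) c c01 by (auto simp: arc_less_def arc_le_h_iff)
  then have "c < c'" by simp
  then have "z \<in> arc_seg \<gamma> e z z'" "z' \<in> arc_seg \<gamma> e z z'" using c01 by (auto simp: arc_seg_h c)
  then have "g x \<le> c" "c' \<le> g y" using below above c c01 by (auto simp: arc_le_iff g_h)
  then show ?thesis using d xy grid_1_gap[OF c(1,2) \<open>c < c'\<close>] by force
qed

lemma dist_in_gap_dists:
  assumes c: "c \<in> grid 1" "c' \<in> grid 1" "c < c'" and s: "0 \<le> s" "s \<le> c" and t: "c' \<le> t" "t \<le> 1"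
  shows "dist (h s) (h t) \<in> gap_dists"
proof -
  have c01: "c \<in> {0..1}" "c' \<in> {0..1}" using c grid_subset_interval by auto
  have st: "s \<in> {0..1}" "t \<in> {0..1}" using s t c01 by auto
  have "h c \<in> vertices N S e 1" "h c' \<in> vertices N S e 1" using c vertices_eq_h_grid by auto
  moreover have "arc_less \<gamma> e (h c) (h c')"
    using c c01 inj_on_h by (auto simp: arc_less_def arc_le_h_iff dest: inj_onD)
  moreover have "\<forall>p\<in>arc_seg \<gamma> e (h c) (h c'). arc_le \<gamma> e (h s) p" "\<forall>p\<in>arc_seg \<gamma> e (h c) (h c'). arc_le \<gamma> e p (h t)"
    using c01 st s t by (auto simp: arc_seg_h arc_le_h_iff)
  ultimately show ?thesis unfolding gap_dists_def using h_in_\<gamma> st by blast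
qed

lemma D_le_dist:
  assumes "c \<in> grid 1" "c' \<in> grid 1" "c < c'" "0 \<le> s" "s \<le> c" "c' \<le> t" "t \<le> 1"
  shows "D \<le> dist (h s) (h t)"
  unfolding D_eq_Inf
  by (rule cInf_lower[OF dist_in_gap_dists[OF assms]]) (auto simp: gap_dists_def intro: bdd_belowI[of _ 0])

text \<open>Every element of \<open>gap_dists\<close> is \<open>dist (h u) (h v)\<close> with \<open>u + 1/N \<le> v\<close>, and by compactness
  and injectivity of \<open>h\<close> these distances have a positive minimum.\<close>
lemma D_pos: "0 < D"
proof -
  define K where "K = ({0..1} \<times> {0..1}) \<inter> {p :: real \<times> real. fst p + 1 / N \<le> snd p}"
  have cK: "compact K" unfolding K_def
    by (intro compact_Int_closed compact_Times closed_Collect_le continuous_intros) auto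
  have "(0, 1) \<in> K" using N_gt_1 unfolding K_def by auto
  then have neK: "K \<noteq> {}" by blast
  have cont: "continuous_on K (\<lambda>p. dist (h (fst p)) (h (snd p)))"
    by (intro continuous_on_dist continuous_on_compose2[OF continuous_on_h] continuous_intros)
      (auto simp: K_def)
  obtain p0 where p0: "p0 \<in> K" "\<And>p. p \<in> K \<Longrightarrow> dist (h (fst p0)) (h (snd p0)) \<le> dist (h (fst p)) (h (snd p))"
    using continuous_attains_inf[OF cK neK cont] by blast
  have "fst p0 \<noteq> snd p0" "fst p0 \<in> {0..1}" "snd p0 \<in> {0..1}" using p0(1) N_pos unfolding K_def by auto
  then have pos: "0 < dist (h (fst p0)) (h (snd p0))" using inj_on_h by (auto dest: inj_onD)
  have "0 \<in> grid 1" "1 \<in> grid 1" using N_pos by (auto simp: grid_def intro!: exI[of _ N])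
  then have "gap_dists \<noteq> {}" using dist_in_gap_dists[of 0 1 0 1] by auto
  then have "dist (h (fst p0)) (h (snd p0)) \<le> D"
    unfolding D_eq_Inf
  proof (rule cInf_greatest)
    fix d assume "d \<in> gap_dists"
    then obtain x y where xy: "d = dist x y" "x \<in> \<gamma>" "y \<in> \<gamma>" "g x + 1 / N \<le> g y"
      using gap_dists_elem by blast
    then have "(g x, g y) \<in> K" using g_in_interval unfolding K_def by auto
    then show "dist (h (fst p0)) (h (snd p0)) \<le> d" using p0(2) xy h_g by fastforce
  qed
  with pos show ?thesis by linarith
qed

lemma cell_scaling:
  assumes c0: "c0 \<in> grid p" "c0 < 1"
  obtains \<rho> where "0 < \<rho>"
    and "\<And>r r'. r \<in> {c0..c0 + 1 / real N ^ p} \<Longrightarrow> r' \<in> {c0..c0 + 1 / real N ^ p} \<Longrightarrow>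
      dist (h r) (h r') = \<rho> * dist (h (real N ^ p * (r - c0))) (h (real N ^ p * (r' - c0)))"
proof -
  obtain k where k: "k < N ^ p" "c0 = real k / real N ^ p" using grid_less_1_obtain[OF c0] .
  obtain \<sigma> where \<sigma>: "\<sigma> \<in> words N p" "word_code \<sigma> = k" using word_code_surj[OF k(1)] by blast
  have \<sigma>_letters: "set \<sigma> \<subseteq> {1..N}" "length \<sigma> = p" using \<sigma>(1) by (auto simp: words_def)
  obtain \<rho> where \<rho>: "0 < \<rho>" "\<And>x y. dist (word_map S \<sigma> x) (word_map S \<sigma> y) = \<rho> * dist x y"
    using word_map_similarity[of \<sigma> S] \<sigma>_letters S_similarity by blast
  have "h r = word_map S \<sigma> (h (real N ^ p * (r - c0)))" if "r \<in> {c0..c0 + 1 / real N ^ p}" for r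
  proof -
    have zoom: "real N ^ p * (r - c0) \<in> {0..1}" using that N_power_pos[of p] by (auto simp: field_simps)
    have "h r = h ((real (word_code \<sigma>) + real N ^ p * (r - c0)) / real N ^ length \<sigma>)"
      using N_pos by (simp add: k(2) \<sigma> \<sigma>_letters field_simps)
    also have "\<dots> = word_map S \<sigma> (h (real N ^ p * (r - c0)))" by (rule h_word[OF \<sigma>_letters(1) zoom])
    finally show ?thesis .
  qed
  with \<rho> that show ?thesis by simp
qed

lemma cell_estimate:
  assumes c0: "c0 \<in> grid p" "c0 < 1"
    and c: "c \<in> grid (Suc p)" "c' \<in> grid (Suc p)" "c < c'"
    and st: "c0 \<le> s" "s \<le> c" "c' \<le> t" "t \<le> c0 + 1 / real N ^ p"
  shows "D * diameter (h ` {s..t}) \<le> diameter \<gamma> * dist (h s) (h t)"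
proof -
  define zoom where "zoom r = real N ^ p * (r - c0)" for r
  have sub: "{s..t} \<subseteq> {c0..c0 + 1 / real N ^ p}" using st c(3) by auto
  obtain \<rho> where \<rho>: "0 < \<rho>" "\<And>r r'. r \<in> {c0..c0 + 1 / real N ^ p} \<Longrightarrow> r' \<in> {c0..c0 + 1 / real N ^ p} \<Longrightarrow>
      dist (h r) (h r') = \<rho> * dist (h (zoom r)) (h (zoom r'))"
    using cell_scaling[OF c0] unfolding zoom_def by blast
  have zoom_range: "zoom r \<in> {0..1}" if "r \<in> {s..t}" for r
    using subsetD[OF sub that] N_power_pos[of p] by (auto simp: zoom_def field_simps)
  have "zoom c \<in> grid 1" "zoom c' \<in> grid 1"
    using grid_zoom[OF c0(1) c(1)] grid_zoom[OF c0(1) c(2)] st c(3) by (auto simp: zoom_def)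
  moreover have "zoom c < zoom c'" "zoom s \<le> zoom c" "zoom c' \<le> zoom t"
    using c(3) st N_power_pos[of p] by (auto simp: zoom_def)
  moreover have "0 \<le> zoom s" "zoom t \<le> 1" using zoom_range[of s] zoom_range[of t] st c(3) by auto
  ultimately have gap: "D \<le> dist (h (zoom s)) (h (zoom t))" by (intro D_le_dist)
  have bdd: "bounded \<gamma>" by (rule compact_imp_bounded[OF compact_\<gamma>])
  have diam: "diameter (h ` {s..t}) \<le> \<rho> * diameter \<gamma>"
  proof (rule diameter_le)
    show "h ` {s..t} \<noteq> {} \<or> 0 \<le> \<rho> * diameter \<gamma>" using \<rho>(1) diameter_ge_0[OF bdd] by simp
    fix a b assume "a \<in> h ` {s..t}" "b \<in> h ` {s..t}"
    then obtain ra rb where r: "ra \<in> {s..t}" "rb \<in> {s..t}" "a = h ra" "b = h rb" by auto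
    have "norm (a - b) = \<rho> * dist (h (zoom ra)) (h (zoom rb))"
      using r \<rho>(2) sub by (simp add: dist_norm subset_iff)
    also have "\<dots> \<le> \<rho> * diameter \<gamma>"
      using \<rho>(1) zoom_range r by (intro mult_left_mono diameter_bounded_bound[OF bdd] h_in_\<gamma>) auto
    finally show "norm (a - b) \<le> \<rho> * diameter \<gamma>" .
  qed
  have "D * diameter (h ` {s..t}) \<le> D * (\<rho> * diameter \<gamma>)"
    by (rule mult_left_mono[OF diam]) (use D_pos in simp)
  also have "\<dots> = diameter \<gamma> * (\<rho> * D)" by simp
  also have "\<dots> \<le> diameter \<gamma> * (\<rho> * dist (h (zoom s)) (h (zoom t)))"
    using gap \<rho>(1) diameter_ge_0[OF bdd] by (simp add: mult_left_mono)
  finally show ?thesis using \<rho>(2)[of s t] sub st c(3) by simp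
qed

lemma estimate_right_of_grid_point:
  assumes c: "c \<in> grid m" and t: "c \<le> t" "t \<le> 1" "t - c < 1 / real N ^ m"
  shows "D * diameter (h ` {c..t}) \<le> diameter \<gamma> * dist (h c) (h t)"
proof (cases "c = t")
  case False
  then have t: "c < t" "t \<le> 1" "t - c < 1 / real N ^ m" using t by auto
  obtain p where p: "m \<le> p" "1 / real N ^ Suc p \<le> t - c" "t - c < 1 / real N ^ p"
    using exists_power_bracket[OF N_gt_1, of "t - c" m] t by auto
  have cp: "c \<in> grid p" "c \<in> grid (Suc p)" using grid_mono[OF _ c] p(1) by auto
  show ?thesis
    by (rule cell_estimate[OF cp(1) _ cp(2) grid_add_step[OF cp(2)]]) (use t p N_power_pos[of "Suc p"] in auto)
qed simp

lemma estimate_left_of_grid_point: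
  assumes c: "c \<in> grid m" and s: "0 \<le> s" "s \<le> c" "c - s < 1 / real N ^ m"
  shows "D * diameter (h ` {s..c}) \<le> diameter \<gamma> * dist (h s) (h c)"
proof (cases "s = c")
  case False
  then have s: "0 \<le> s" "s < c" "c - s < 1 / real N ^ m" using s by auto
  obtain p where p: "m \<le> p" "1 / real N ^ Suc p \<le> c - s" "c - s < 1 / real N ^ p"
    using exists_power_bracket[OF N_gt_1, of "c - s" m] s by auto
  have cp: "c \<in> grid p" "c \<in> grid (Suc p)" using grid_mono[OF _ c] p(1) by auto
  have "c \<le> 1" using grid_subset_interval[OF c] by simp
  show ?thesis
    by (rule cell_estimate[OF grid_diff_step[OF cp(1)] _ grid_diff_step[OF cp(2)] cp(2)])
      (use s p \<open>c \<le> 1\<close> N_power_pos[of "Suc p"] in auto)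
qed simp

lemma vertices_between:
  assumes "s \<in> {0..1}" "t \<in> {0..1}"
  shows "(\<exists>v\<in>vertices N S e m. arc_le \<gamma> e (h s) v \<and> arc_le \<gamma> e v (h t)) \<longleftrightarrow>
    (\<exists>c\<in>grid m. s \<le> c \<and> c \<le> t)"
  using assms grid_subset_interval by (auto simp: vertices_eq_h_grid arc_le_h_iff)

lemma case2_triple_h:
  assumes st: "0 \<le> s" "s < t" "t \<le> 1" and m: "1 \<le> m"
    and below: "\<And>k. 1 \<le> k \<Longrightarrow> k < m \<Longrightarrow> \<not> (\<exists>c\<in>grid k. s \<le> c \<and> c \<le> t)"
    and c: "c \<in> grid m" "s \<le> c" "c \<le> t"
    and unique: "\<And>c'. c' \<in> grid m \<Longrightarrow> s \<le> c' \<Longrightarrow> c' \<le> t \<Longrightarrow> c' = c"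
  shows "case2_triple N S \<gamma> e (h s) (h c) (h t)"
  unfolding case2_triple_def
proof (intro conjI exI[of _ m] allI impI ballI)
  have st01: "s \<in> {0..1}" "t \<in> {0..1}" and c01: "c \<in> {0..1}" using st grid_subset_interval[OF c(1)] by auto
  show "arc_less \<gamma> e (h s) (h t)"
    using st st01 inj_on_h by (auto simp: arc_less_def arc_le_h_iff dest: inj_onD)
  show "1 \<le> m" by (fact m)
  show "\<not> (\<exists>v\<in>vertices N S e k. arc_le \<gamma> e (h s) v \<and> arc_le \<gamma> e v (h t))" if "1 \<le> k \<and> k < m" for k
    using below that vertices_between[OF st01] by blast
  show "h c \<in> vertices N S e m" using c(1) vertices_eq_h_grid by auto
  show "arc_le \<gamma> e (h s) (h c)" "arc_le \<gamma> e (h c) (h t)" using st01 c01 c by (auto simp: arc_le_h_iff)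
  show "v = h c" if "v \<in> vertices N S e m" "arc_le \<gamma> e (h s) v \<and> arc_le \<gamma> e v (h t)" for v
    using that unique st01 grid_subset_interval by (auto simp: vertices_eq_h_grid arc_le_h_iff)
qed

lemma estimate_two_grid_points:
  assumes st: "0 \<le> s" "t \<le> 1" and m: "1 \<le> m"
    and coarser: "m = 1 \<or> \<not> (\<exists>c\<in>grid (m - 1). s \<le> c \<and> c \<le> t)"
    and c: "c \<in> grid m" "c' \<in> grid m" "s \<le> c" "c < c'" "c' \<le> t"
  shows "D * diameter (h ` {s..t}) \<le> diameter \<gamma> * dist (h s) (h t)"
proof -
  have grid_m: "grid (Suc (m - 1)) = grid m" using m by simp
  obtain c0 where "c0 \<in> grid (m - 1)" "c0 < 1" "c0 \<le> s" "t \<le> c0 + 1 / real N ^ (m - 1)"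
    using common_cell[of s t "m - 1"] st c coarser by force
  then show ?thesis using cell_estimate[of c0 "m - 1" c c' s t] c grid_m by simp
qed

text \<open>Uniqueness of \<open>c\<close> makes both halves \<open>[s,c]\<close> and \<open>[c,t]\<close> shorter than \<open>N^-m\<close>.\<close>
lemma estimate_unique_grid_point:
  assumes st: "0 \<le> s" "t \<le> 1" and c: "c \<in> grid m" "s \<le> c" "c \<le> t"
    and unique: "\<And>c'. c' \<in> grid m \<Longrightarrow> s \<le> c' \<Longrightarrow> c' \<le> t \<Longrightarrow> c' = c"
    and case2: "max (dist (h s) (h c)) (dist (h c) (h t)) \<le> C * dist (h s) (h t)"
  shows "D * diameter (h ` {s..t}) \<le> 2 * C * diameter \<gamma> * dist (h s) (h t)"
proof -
  have c01: "c \<in> {0..1}" using grid_subset_interval[OF c(1)] .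
  have "c - s < 1 / real N ^ m"
  proof (rule ccontr)
    assume far: "\<not> ?thesis"
    have step: "0 < 1 / real N ^ m" using N_power_pos[of m] by simp
    then have "0 < c" using far st by linarith
    then have "c - 1 / real N ^ m = c"
      using far c step by (intro unique[OF grid_diff_step[OF c(1) \<open>0 < c\<close>]]) linarith+
    then show False using step by linarith
  qed
  then have left: "D * diameter (h ` {s..c}) \<le> diameter \<gamma> * dist (h s) (h c)"
    by (rule estimate_left_of_grid_point[OF c(1) st(1) c(2)])
  have "t - c < 1 / real N ^ m"
  proof (rule ccontr)
    assume far: "\<not> ?thesis"
    have step: "0 < 1 / real N ^ m" using N_power_pos[of m] by simp
    then have "c < 1" using far st by linarith
    then have "c + 1 / real N ^ m = c"
      using far c step by (intro unique[OF grid_add_step[OF c(1) \<open>c < 1\<close>]]) linarith+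
    then show False using step by linarith
  qed
  then have right: "D * diameter (h ` {c..t}) \<le> diameter \<gamma> * dist (h c) (h t)"
    by (rule estimate_right_of_grid_point[OF c(1) c(3) st(2)])
  have bounded: "bounded (h ` {a..b})" if "{a..b} \<subseteq> {0..1}" for a b
    by (intro compact_imp_bounded compact_continuous_image continuous_on_subset[OF continuous_on_h that]) simp
  have "{s..t} = {s..c} \<union> {c..t}" using c by auto
  then have "diameter (h ` {s..t}) \<le> diameter (h ` {s..c}) + diameter (h ` {c..t})"
    using diameter_Un_le[of "h ` {s..c}" "h ` {c..t}" "h c"] bounded st c c01 by (simp add: image_Un)
  then have "D * diameter (h ` {s..t}) \<le> D * (diameter (h ` {s..c}) + diameter (h ` {c..t}))"
    using D_pos by (simp add: mult_left_mono)
  also have "\<dots> \<le> diameter \<gamma> * (dist (h s) (h c) + dist (h c) (h t))"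
    using left right by (simp add: distrib_left)
  also have "\<dots> \<le> diameter \<gamma> * (2 * (C * dist (h s) (h t)))"
    using case2 diameter_ge_0[OF compact_imp_bounded[OF compact_\<gamma>]] by (intro mult_left_mono) auto
  finally show ?thesis by (simp add: mult_ac)
qed

lemma subarc_estimate:
  assumes C: "1 \<le> C"
    and case2: "\<forall>x z y. case2_triple N S \<gamma> e x z y \<longrightarrow> max (dist x z) (dist z y) \<le> C * dist x y"
    and st: "0 \<le> s" "s < t" "t \<le> 1"
  shows "D * diameter (h ` {s..t}) \<le> 2 * C * diameter \<gamma> * dist (h s) (h t)"
proof -
  define meets where "meets m \<longleftrightarrow> 1 \<le> m \<and> (\<exists>c\<in>grid m. s \<le> c \<and> c \<le> t)" for m
  have "1 / real N < 1" using N_gt_1 by simp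
  then obtain m0 where "(1 / real N) ^ m0 < t - s" using real_arch_pow_inv st by (metis diff_gt_0_iff_gt)
  moreover have "1 / real N ^ Suc m0 \<le> 1 / real N ^ m0"
    using N_gt_1 by (intro divide_left_mono power_increasing) auto
  ultimately have "meets (Suc m0)" using grid_meets_interval[of s t "Suc m0"] st
    by (simp add: meets_def power_one_over)
  define m where "m = (LEAST m. meets m)"
  have "meets m" unfolding m_def by (rule LeastI[where P = meets, OF \<open>meets (Suc m0)\<close>])
  then obtain c where m: "1 \<le> m" and c: "c \<in> grid m" "s \<le> c" "c \<le> t" unfolding meets_def by blast
  have below: "\<not> meets k" if "k < m" for k using not_less_Least[of k meets] that by (simp add: m_def)
  show ?thesis
  proof (cases "\<exists>c'\<in>grid m. s \<le> c' \<and> c' \<le> t \<and> c' \<noteq> c")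
    case True
    then obtain c' where c': "c' \<in> grid m" "s \<le> c'" "c' \<le> t" "c' \<noteq> c" by blast
    have "m = 1 \<or> \<not> (\<exists>c\<in>grid (m - 1). s \<le> c \<and> c \<le> t)" using below[of "m - 1"] m by (auto simp: meets_def)
    then have "D * diameter (h ` {s..t}) \<le> diameter \<gamma> * dist (h s) (h t)"
      using estimate_two_grid_points[OF st(1,3) m] c c' by (cases "c < c'") (auto simp: not_less)
    also have "\<dots> \<le> 2 * C * (diameter \<gamma> * dist (h s) (h t))"
      using mult_right_mono[of 1 "2 * C" "diameter \<gamma> * dist (h s) (h t)"] C
        diameter_ge_0[OF compact_imp_bounded[OF compact_\<gamma>]] by simp
    finally show ?thesis by (simp add: mult_ac)
  next
    case False
    then have unique: "\<And>c'. c' \<in> grid m \<Longrightarrow> s \<le> c' \<Longrightarrow> c' \<le> t \<Longrightarrow> c' = c" by blast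
    have "case2_triple N S \<gamma> e (h s) (h c) (h t)"
      using case2_triple_h[OF st m _ c unique] below by (auto simp: meets_def)
    then show ?thesis using estimate_unique_grid_point[OF st(1,3) c unique] case2 by blast
  qed
qed

lemma bounded_turning_from_case2:
  assumes C: "1 \<le> C"
    and case2: "\<forall>x z y. case2_triple N S \<gamma> e x z y \<longrightarrow> max (dist x z) (dist z y) \<le> C * dist x y"
  shows "bounded_turning \<gamma> (2 * C * diameter \<gamma> / D)"
proof -
  have sub: "\<exists>E. E \<subseteq> \<gamma> \<and> compact E \<and> connected E \<and> h s \<in> E \<and> h t \<in> E \<and>
      diameter E \<le> 2 * C * diameter \<gamma> / D * dist (h s) (h t)"
    if st: "0 \<le> s" "s < t" "t \<le> 1" for s t
  proof (intro exI conjI)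
    have sub: "{s..t} \<subseteq> {0..1}" using st by auto
    show "h ` {s..t} \<subseteq> \<gamma>" using h_in_\<gamma> sub by auto
    show "compact (h ` {s..t})" "connected (h ` {s..t})"
      by (intro compact_continuous_image connected_continuous_image continuous_on_subset[OF continuous_on_h sub];
          simp)+
    show "h s \<in> h ` {s..t}" "h t \<in> h ` {s..t}" using st by auto
    show "diameter (h ` {s..t}) \<le> 2 * C * diameter \<gamma> / D * dist (h s) (h t)"
      using subarc_estimate[OF C case2 st] D_pos by (simp add: pos_le_divide_eq mult.commute)
  qed
  show ?thesis unfolding bounded_turning_def
  proof (intro ballI impI)
    fix a b assume ab: "a \<in> \<gamma>" "b \<in> \<gamma>" "a \<noteq> b"
    then have "g a \<noteq> g b" "g a \<in> {0..1}" "g b \<in> {0..1}" using h_g g_in_interval by metis+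
    then show "\<exists>E\<subseteq>\<gamma>. compact E \<and> connected E \<and> a \<in> E \<and> b \<in> E \<and> diameter E \<le> 2 * C * diameter \<gamma> / D * dist a b"
      using sub[of "g a" "g b"] sub[of "g b" "g a"] h_g ab
      by (cases "g a < g b") (auto simp: dist_commute)
  qed
qed

end

theorem lemma3p1:
  fixes N :: nat and S :: "nat \<Rightarrow> 'a::euclidean_space \<Rightarrow> 'a" and \<gamma> :: "'a set" and e :: 'a
  assumes "e \<in> Basis"
    and "normalized_IFS_arc N S \<gamma> e"
  shows "(\<forall>C::real. C \<ge> 1 \<and>
            (\<forall>x z y. case2_triple N S \<gamma> e x z y \<longrightarrow> max (dist x z) (dist z y) \<le> C * dist x y)
          \<longrightarrow> bounded_turning \<gamma> (2 * C * diameter \<gamma> / D_S N S \<gamma> e))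
       \<and> (\<forall>C::real. C \<ge> 1 \<and> bounded_turning \<gamma> C \<longrightarrow>
            (\<forall>x z y. arc_le \<gamma> e x z \<and> arc_le \<gamma> e z y \<longrightarrow> max (dist x z) (dist z y) \<le> C * dist x y))"
proof -
  interpret IFS_arc N S \<gamma> e
    using assms by unfold_locales (auto simp: nonzero_Basis)
  show ?thesis using bounded_turning_from_case2 bounded_turning_imp_dist_le by blast
qed

end
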